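(* Consider, for $x\ge0$, the planar piecewise-smooth (Filippov) system $$\dot x=1,\qquad \dot y=-ay-\big[1+(1+\lambda)\cos\pi x\big]\sin\tfrac{\pi x}{2},$$ with $\lambda=\operatorname{sign}(y)$ for $y\ne0$ and $\lambda\in(-1,1)$ on $y=0$. There exists $a_h>0$, $a_h\gg1$, such that for all $a\in(a_h,+\infty)$ the system has a sliding $4$-periodic solution. Moreover, for every $a\in(a_h,+\infty)$ there exists $\nu(a)>0$ such that the solutions $y(x,x_i)$ of the system with $x_i\in(\frac83,\frac{10}{3})\cup(\frac{10}{3},\frac{10}{3}+\nu(a))$ converge in finite time to the periodic solution $y(x,\frac{10}{3})$ (i.e. coincide with it for all sufficiently large $x$).
   Context: $y(x,x_i)$ denotes the solution with $y(x_i)=0$. For $y>0$ the system is $\dot y=-ay-\sin(3\pi x/2)$ and for $y<0$ it is $\dot y=-ay-\sin(\pi x/2)$. The sliding manifold is $\Lambda^L=\{(x,0): x\in(\frac23+2n,\frac43+2n),\ n\in\mathbb{N}\}$; on the intervals $(\frac83+4n,\frac{10}{3}+4n)$ both vector fields point towards $y=0$ (attracting sliding: solutions reaching $y=0$ there remain on it with $\dot x=1$ until the right endpoint, where they leave into $y>0$), on $(\frac23+4n,\frac43+4n)$ both point away (repelling), and elsewhere on $y=0$ solutions cross transversally (Filippov convention). A periodic solution is sliding if part of it lies on $\Lambda^L$. *)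

theory Defs
  imports "HOL-Analysis.Analysis"
begin

definition filippov_rhs :: "real \<Rightarrow> real \<Rightarrow> real \<Rightarrow> real set" where
  "filippov_rhs a x y =
     {- a * y - (1 + (1 + l) * cos (pi * x)) * sin (pi * x / 2) | l.
        (y > 0 \<and> l = 1) \<or> (y < 0 \<and> l = -1) \<or> (y = 0 \<and> -1 < l \<and> l < 1)}"

text \<open>A (forward) Filippov solution on [x0, \<infinity>): y is the indefinite integral of a
  locally Lebesgue integrable selection g of the right-hand side, i.e. y is locally
  absolutely continuous with y' \<in> F(x, y(x)) almost everywhere.\<close>
definition filippov_sol :: "real \<Rightarrow> (real \<Rightarrow> real) \<Rightarrow> real \<Rightarrow> bool" where
  "filippov_sol a y x0 \<longleftrightarrow>
     (\<exists>g :: real \<Rightarrow> real.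
        (\<forall>x\<ge>x0. g x \<in> filippov_rhs a x (y x)) \<and>
        (\<forall>x\<ge>x0. g absolutely_integrable_on {x0..x} \<and>
                   (g has_integral (y x - y x0)) {x0..x}))"

definition LambdaL :: "real set" where
  "LambdaL = {x. \<exists>n::nat. 2/3 + 2 * real n < x \<and> x < 4/3 + 2 * real n}"

definition sliding :: "(real \<Rightarrow> real) \<Rightarrow> bool" where
  "sliding p \<longleftrightarrow> (\<exists>x1 x2. 0 \<le> x1 \<and> x1 < x2 \<and> (\<forall>x\<in>{x1..x2}. x \<in> LambdaL \<and> p x = 0))"

end

theory Submission
  imports Defs
begin

text \<open>For \<open>a \<ge> 10\<close> the strip \<open>\<bar>y\<bar> \<le> 1/a\<close> is invariant, so along a solution the sign of \<open>y'\<close> is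
  dictated by the forcing term \<open>f_plus\<close> (above the line \<open>y = 0\<close>) or \<open>f_minus\<close> (below it); in
  particular \<open>\<bar>y\<bar> \<le> 1/10\<close> is less than the drop \<open>1/9\<close> forced on an interval of length \<open>2/9\<close> where
  the active forcing is at most \<open>-1/2\<close>, so every arc must return to \<open>y = 0\<close>. A solution
  leaving \<open>y = 0\<close> at a point of \<open>[10/3, 4)\<close> is pushed upwards, returns to \<open>y = 0\<close> in \<open>[4, 41/9]\<close>,
  makes a negative arc ending in \<open>[6, 59/9]\<close> and a positive arc ending in \<open>[20/3, 65/9]\<close>, and then
  slides on \<open>y = 0\<close> up to \<open>22/3 = 10/3 + 4\<close>, because there both vector fields point towards the line.
  Between consecutive zeros the solution solves a linear equation \<open>y' = f x - a y\<close>, so all these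
  arcs, and hence the whole solution, are unique. By the 4-periodicity of the system the solution
  through \<open>(10/3, 0)\<close> extends to a 4-periodic sliding solution, and a solution through \<open>(\<xi>, 0)\<close> with
  \<open>8/3 < \<xi> < 4\<close> coincides with it from \<open>22/3\<close> on (for \<open>\<xi> \<le> 10/3\<close> it first slides to \<open>(10/3, 0)\<close>).\<close>

section \<open>The Filippov right-hand side\<close>

definition f_plus :: "real \<Rightarrow> real" where
  "f_plus x = - sin (3 * pi * x / 2)"

definition f_minus :: "real \<Rightarrow> real" where
  "f_minus x = - sin (pi * x / 2)"

lemma sin_triple_angle_product: "(1 + 2 * cos (2 * t)) * sin t = sin (3 * t :: real)"
proof -
  have "sin (3 * t) = sin (2 * t + t)" by simp
  also have "\<dots> = sin (2 * t) * cos t + cos (2 * t) * sin t" by (rule sin_add)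
  also have "\<dots> = (1 + 2 * cos (2 * t)) * sin t"
    unfolding sin_double cos_double_cos by (simp add: algebra_simps power2_eq_square)
  finally show ?thesis ..
qed

text \<open>The parameter \<open>\<lambda> \<in> (-1, 1)\<close> of the system corresponds to \<open>t = (1 + \<lambda>) / 2\<close>.\<close>
lemma filippov_rhs_eq:
  "filippov_rhs a x y =
     {(1 - t) * f_minus x + t * f_plus x - a * y | t.
        (y > 0 \<and> t = 1) \<or> (y < 0 \<and> t = 0) \<or> (y = 0 \<and> 0 < t \<and> t < 1)}"
proof -
  have triple: "sin (3 * pi * x / 2) = (1 + 2 * cos (pi * x)) * sin (pi * x / 2)"
    using sin_triple_angle_product[of "pi * x / 2"] by (simp add: mult.assoc)
  have combination: "(1 + (1 + l) * cos (pi * x)) * sin (pi * x / 2)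
        = - ((1 - (1 + l) / 2) * f_minus x + (1 + l) / 2 * f_plus x)" for l
    unfolding f_plus_def f_minus_def triple by (simp add: field_simps)
  show ?thesis
    unfolding filippov_rhs_def combination
  proof (intro set_eqI iffI; elim CollectE exE conjE)
    fix g l assume "g = - a * y - - ((1 - (1 + l) / 2) * f_minus x + (1 + l) / 2 * f_plus x)"
      "y > 0 \<and> l = 1 \<or> y < 0 \<and> l = -1 \<or> y = 0 \<and> -1 < l \<and> l < 1"
    then show "g \<in> {(1 - t) * f_minus x + t * f_plus x - a * y | t.
        (y > 0 \<and> t = 1) \<or> (y < 0 \<and> t = 0) \<or> (y = 0 \<and> 0 < t \<and> t < 1)}"
      by (intro CollectI exI[of _ "(1 + l) / 2"]) auto
  next
    fix g t assume "g = (1 - t) * f_minus x + t * f_plus x - a * y"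
      "y > 0 \<and> t = 1 \<or> y < 0 \<and> t = 0 \<or> y = 0 \<and> 0 < t \<and> t < 1"
    then show "g \<in> {- a * y - - ((1 - (1 + l) / 2) * f_minus x + (1 + l) / 2 * f_plus x) | l.
        (y > 0 \<and> l = 1) \<or> (y < 0 \<and> l = -1) \<or> (y = 0 \<and> -1 < l \<and> l < 1)}"
      by (intro CollectI exI[of _ "2 * t - 1"]) auto
  qed
qed

lemma filippov_rhs_pos: "y > 0 \<Longrightarrow> filippov_rhs a x y = {f_plus x - a * y}"
  by (auto simp: filippov_rhs_eq)

lemma filippov_rhs_neg: "y < 0 \<Longrightarrow> filippov_rhs a x y = {f_minus x - a * y}"
  by (auto simp: filippov_rhs_eq)

lemma filippov_rhs_hull:
  assumes "g \<in> filippov_rhs a x y"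
  shows "min (f_plus x) (f_minus x) - a * y \<le> g \<and> g \<le> max (f_plus x) (f_minus x) - a * y"
proof -
  obtain t where g: "g = (1 - t) * f_minus x + t * f_plus x - a * y"
    and "(y > 0 \<and> t = 1) \<or> (y < 0 \<and> t = 0) \<or> (y = 0 \<and> 0 < t \<and> t < 1)"
    using assms unfolding filippov_rhs_eq by blast
  then have t: "0 \<le> t" "t \<le> 1" by auto
  have "min (f_plus x) (f_minus x) \<le> (1 - t) * f_minus x + t * f_plus x"
    using convex_bound_le[of "- f_minus x" "- min (f_plus x) (f_minus x)" "- f_plus x" "1 - t" t] t
    by (simp add: algebra_simps)
  moreover have "(1 - t) * f_minus x + t * f_plus x \<le> max (f_plus x) (f_minus x)"
    by (rule convex_bound_le) (use t in auto)
  ultimately show ?thesis unfolding g by linarith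
qed

lemma filippov_rhs_abs_le:
  assumes "g \<in> filippov_rhs a x y"
  shows "\<bar>g\<bar> \<le> \<bar>a * y\<bar> + 1"
proof -
  have "- 1 \<le> min (f_plus x) (f_minus x)" "max (f_plus x) (f_minus x) \<le> 1"
    by (simp_all add: f_plus_def f_minus_def)
  then have "- 1 - a * y \<le> g" "g \<le> 1 - a * y" using filippov_rhs_hull[OF assms] by linarith+
  then show ?thesis using abs_ge_self[of "a * y"] abs_ge_minus_self[of "a * y"] by (simp add: abs_le_iff)
qed

text \<open>Choosing \<open>0\<close> where both vector fields point towards \<open>y = 0\<close> makes sliding along
  \<open>y = 0\<close> a primitive of the selection.\<close>
definition filippov_sel :: "real \<Rightarrow> real \<Rightarrow> real \<Rightarrow> real" where
  "filippov_sel a x y =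
     (if y > 0 then f_plus x - a * y
      else if y < 0 then f_minus x - a * y
      else if f_plus x < 0 \<and> 0 < f_minus x then 0
      else (f_plus x + f_minus x) / 2)"

lemma filippov_sel_in_rhs: "filippov_sel a x y \<in> filippov_rhs a x y"
proof (cases "y = 0 \<and> f_plus x < 0 \<and> 0 < f_minus x")
  case True
  define t where "t = f_minus x / (f_minus x - f_plus x)"
  have "0 < t" "t < 1" using True by (auto simp: t_def divide_simps)
  moreover have "(1 - t) * f_minus x + t * f_plus x = 0"
    using True by (simp add: t_def field_simps)
  ultimately show ?thesis
    using True by (auto simp: filippov_sel_def filippov_rhs_eq intro!: exI[of _ t])
next
  case False
  then show ?thesis
    by (auto simp: filippov_sel_def filippov_rhs_eq intro!: exI[of _ "1/2"])
qed

lemma continuous_on_f_plus: "continuous_on S f_plus"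
  and continuous_on_f_minus: "continuous_on S f_minus"
  unfolding f_plus_def[abs_def] f_minus_def[abs_def] by (auto intro!: continuous_intros)

lemma continuous_on_min_forcing: "continuous_on S (\<lambda>x. min (f_plus x) (f_minus x))"
  and continuous_on_max_forcing: "continuous_on S (\<lambda>x. max (f_plus x) (f_minus x))"
  by (intro continuous_intros continuous_on_f_plus continuous_on_f_minus)+

lemma sin_pi_add_nat: "sin (pi * (r + real n)) = (- 1) ^ n * sin (pi * r)"
proof (induction n)
  case (Suc n)
  have "pi * (r + real (Suc n)) = pi * (r + real n) + pi" by (simp add: algebra_simps)
  then show ?case by (simp add: Suc.IH)
qed simp

lemma f_plus_shifted: "f_plus x = (- 1) ^ Suc n * sin (pi * (3 * x / 2 - real n))"
proof -
  have "3 * pi * x / 2 = pi * (3 * x / 2 - real n + real n)" by simp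
  then show ?thesis by (simp only: f_plus_def sin_pi_add_nat) simp
qed

lemma f_minus_shifted: "f_minus x = (- 1) ^ Suc n * sin (pi * (x / 2 - real n))"
proof -
  have "pi * x / 2 = pi * (x / 2 - real n + real n)" by simp
  then show ?thesis by (simp only: f_minus_def sin_pi_add_nat) simp
qed

lemma f_plus_periodic: "f_plus (x + 4) = f_plus x"
  using f_plus_shifted[of "x + 4" 6] f_plus_shifted[of x 0] by (simp add: field_simps)

lemma f_minus_periodic: "f_minus (x + 4) = f_minus x"
  using f_minus_shifted[of "x + 4" 2] f_minus_shifted[of x 0] by (simp add: field_simps)

lemma filippov_rhs_periodic: "filippov_rhs a (x + 4) y = filippov_rhs a x y"
  by (simp add: filippov_rhs_eq f_plus_periodic f_minus_periodic)

lemma filippov_sel_periodic: "filippov_sel a (x + 4) y = filippov_sel a x y"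
  by (simp add: filippov_sel_def f_plus_periodic f_minus_periodic)

lemma sin_pi_pos: "0 < r \<Longrightarrow> r < 1 \<Longrightarrow> 0 < sin (pi * r)"
  by (rule sin_gt_zero) auto

lemma sin_pi_nonneg: "0 \<le> r \<Longrightarrow> r \<le> 1 \<Longrightarrow> 0 \<le> sin (pi * r)"
  by (rule sin_ge_zero) (auto simp: mult_left_le)

lemma sin_pi_ge_half: "1/6 \<le> r \<Longrightarrow> r \<le> 5/6 \<Longrightarrow> 1/2 \<le> sin (pi * r)"
proof -
  assume r: "1/6 \<le> r" "r \<le> 5/6"
  have "sin (pi / 6) \<le> sin (pi * min r (1 - r))"
    by (rule sin_monotone_2pi_le) (use r in \<open>auto simp: min_def\<close>)
  moreover have "sin (pi * min r (1 - r)) = sin (pi * r)"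
    by (auto simp: min_def right_diff_distrib)
  ultimately show ?thesis by (simp add: sin_30)
qed

lemma forcings_pos_before_4: "10/3 < x \<Longrightarrow> x < 4 \<Longrightarrow> 0 < f_plus x \<and> 0 < f_minus x"
  using sin_pi_pos[of "3 * x / 2 - 5"] sin_pi_pos[of "x / 2 - 1"]
  by (simp add: f_plus_shifted[of x 5] f_minus_shifted[of x 1])

lemma forcings_neg_after_4: "4 < x \<Longrightarrow> x < 14/3 \<Longrightarrow> f_plus x < 0 \<and> f_minus x < 0"
  using sin_pi_pos[of "3 * x / 2 - 6"] sin_pi_pos[of "x / 2 - 2"]
  by (simp add: f_plus_shifted[of x 6] f_minus_shifted[of x 2])

lemma forcings_le_neg_half: "13/3 \<le> x \<Longrightarrow> x \<le> 41/9 \<Longrightarrow> f_plus x \<le> -1/2 \<and> f_minus x \<le> -1/2"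
  using sin_pi_ge_half[of "3 * x / 2 - 6"] sin_pi_ge_half[of "x / 2 - 2"]
  by (simp add: f_plus_shifted[of x 6] f_minus_shifted[of x 2])

lemma f_minus_neg_after_4: "4 < x \<Longrightarrow> x < 6 \<Longrightarrow> f_minus x < 0"
  using sin_pi_pos[of "x / 2 - 2"] by (simp add: f_minus_shifted[of x 2])

lemma f_minus_ge_half: "19/3 \<le> x \<Longrightarrow> x \<le> 59/9 \<Longrightarrow> 1/2 \<le> f_minus x"
  using sin_pi_ge_half[of "x / 2 - 3"] by (simp add: f_minus_shifted[of x 3])

lemma forcings_pos_after_6: "6 < x \<Longrightarrow> x < 20/3 \<Longrightarrow> 0 < f_plus x \<and> 0 < f_minus x"
  using sin_pi_pos[of "3 * x / 2 - 9"] sin_pi_pos[of "x / 2 - 3"]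
  by (simp add: f_plus_shifted[of x 9] f_minus_shifted[of x 3])

lemma f_plus_le_neg_half: "61/9 \<le> x \<Longrightarrow> x \<le> 65/9 \<Longrightarrow> f_plus x \<le> -1/2"
  using sin_pi_ge_half[of "3 * x / 2 - 10"] by (simp add: f_plus_shifted[of x 10])

lemma forcings_attracting:
  assumes "x \<in> {8/3<..<10/3} \<union> {20/3<..<22/3}"
  shows "f_plus x < 0 \<and> 0 < f_minus x"
proof (cases "x < 10/3")
  case True
  then show ?thesis
    using assms sin_pi_pos[of "3 * x / 2 - 4"] sin_pi_pos[of "x / 2 - 1"]
    by (simp add: f_plus_shifted[of x 4] f_minus_shifted[of x 1])
next
  case False
  then show ?thesis
    using assms sin_pi_pos[of "3 * x / 2 - 10"] sin_pi_pos[of "x / 2 - 3"]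
    by (simp add: f_plus_shifted[of x 10] f_minus_shifted[of x 3])
qed

lemma forcings_attracting_closed:
  assumes "x \<in> {8/3..10/3} \<union> {20/3..22/3}"
  shows "f_plus x \<le> 0 \<and> 0 \<le> f_minus x"
proof (cases "x \<le> 10/3")
  case True
  then show ?thesis
    using assms sin_pi_nonneg[of "3 * x / 2 - 4"] sin_pi_nonneg[of "x / 2 - 1"]
    by (simp add: f_plus_shifted[of x 4] f_minus_shifted[of x 1])
next
  case False
  then show ?thesis
    using assms sin_pi_nonneg[of "3 * x / 2 - 10"] sin_pi_nonneg[of "x / 2 - 3"]
    by (simp add: f_plus_shifted[of x 10] f_minus_shifted[of x 3])
qed

section \<open>Primitives and comparison arguments\<close>

definition primitive_on :: "(real \<Rightarrow> real) \<Rightarrow> (real \<Rightarrow> real) \<Rightarrow> real \<Rightarrow> real \<Rightarrow> bool" where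
  "primitive_on y g u v \<longleftrightarrow>
     (\<forall>s t. u \<le> s \<longrightarrow> s \<le> t \<longrightarrow> t \<le> v \<longrightarrow> (g has_integral (y t - y s)) {s..t})"

lemma primitive_onD:
  "primitive_on y g u v \<Longrightarrow> u \<le> s \<Longrightarrow> s \<le> t \<Longrightarrow> t \<le> v \<Longrightarrow> (g has_integral (y t - y s)) {s..t}"
  unfolding primitive_on_def by blast

lemma primitive_on_subinterval:
  "primitive_on y g u v \<Longrightarrow> u \<le> u' \<Longrightarrow> v' \<le> v \<Longrightarrow> primitive_on y g u' v'"
  unfolding primitive_on_def by auto

lemma primitive_on_continuous:
  assumes "primitive_on y g u v"
  shows "continuous_on {u..v} y"
proof (cases "u \<le> v")
  case True
  have "g integrable_on {u..v}" using primitive_onD[OF assms order_refl True order_refl] by blast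
  then have "continuous_on {u..v} (\<lambda>t. y u + integral {u..t} g)"
    by (intro continuous_intros indefinite_integral_continuous_1)
  moreover have "y u + integral {u..t} g = y t" if "t \<in> {u..v}" for t
    using primitive_onD[OF assms, of u t] that by (simp add: integral_unique)
  ultimately show ?thesis by (rule continuous_on_eq)
qed simp

lemma primitive_on_iff_from_start:
  "primitive_on y g u v \<longleftrightarrow> (\<forall>t\<in>{u..v}. (g has_integral (y t - y u)) {u..t})"
proof
  show "\<forall>t\<in>{u..v}. (g has_integral (y t - y u)) {u..t}" if "primitive_on y g u v"
    by (intro ballI primitive_onD[OF that]) auto
next
  assume from_start: "\<forall>t\<in>{u..v}. (g has_integral (y t - y u)) {u..t}"
  show "primitive_on y g u v"
    unfolding primitive_on_def
  proof (intro allI impI)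
    fix s t assume st: "u \<le> s" "s \<le> t" "t \<le> v"
    have int_t: "(g has_integral (y t - y u)) {u..t}" using bspec[OF from_start, of t] st by simp
    have int_s: "(g has_integral (y s - y u)) {u..s}" using bspec[OF from_start, of s] st by simp
    have "g integrable_on {s..t}"
      by (rule integrable_subinterval_real[of g u t]) (use int_t st in auto)
    moreover have "integral {u..s} g + integral {s..t} g = integral {u..t} g"
      by (rule Henstock_Kurzweil_Integration.integral_combine) (use int_t st in auto)
    then have "integral {s..t} g = y t - y s"
      using integral_unique[OF int_t] integral_unique[OF int_s] by simp
    ultimately show "(g has_integral (y t - y s)) {s..t}"
      using integrable_integral[of g "{s..t}"] by simp
  qed
qed

lemma primitive_on_uminus:
  "primitive_on y g u v \<Longrightarrow> primitive_on (\<lambda>x. - y x) (\<lambda>x. - g x) u v"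
  unfolding primitive_on_def[of "\<lambda>x. - y x"]
proof (intro allI impI)
  fix s t assume "primitive_on y g u v" "u \<le> s" "s \<le> t" "t \<le> v"
  then have "((\<lambda>x. - g x) has_integral - (y t - y s)) {s..t}"
    by (intro has_integral_neg primitive_onD)
  then show "((\<lambda>x. - g x) has_integral - y t - - y s) {s..t}" by simp
qed

lemma primitive_on_diff:
  "primitive_on y g u v \<Longrightarrow> primitive_on z h u v \<Longrightarrow>
     primitive_on (\<lambda>x. y x - z x) (\<lambda>x. g x - h x) u v"
  unfolding primitive_on_def[of "\<lambda>x. y x - z x"]
proof (intro allI impI)
  fix s t assume "primitive_on y g u v" "primitive_on z h u v" "u \<le> s" "s \<le> t" "t \<le> v"
  then have "((\<lambda>x. g x - h x) has_integral (y t - y s) - (z t - z s)) {s..t}"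
    by (intro has_integral_diff primitive_onD)
  then show "((\<lambda>x. g x - h x) has_integral y t - z t - (y s - z s)) {s..t}"
    by (simp add: algebra_simps)
qed

lemma primitive_on_cong:
  assumes "primitive_on y g u v"
    and "\<And>x. x \<in> {u..v} \<Longrightarrow> y' x = y x" and "\<And>x. x \<in> {u<..<v} \<Longrightarrow> g' x = g x"
  shows "primitive_on y' g' u v"
  unfolding primitive_on_def
proof (intro allI impI)
  fix s t assume st: "u \<le> s" "s \<le> t" "t \<le> v"
  have "(g has_integral (y t - y s)) {s..t}" using primitive_onD[OF assms(1) st] .
  then have "(g' has_integral (y t - y s)) {s..t}"
    by (rule has_integral_spike_finite[of "{u, v}", rotated 2]) (use st assms(3) in auto)
  then show "(g' has_integral (y' t - y' s)) {s..t}" using st assms(2) by simp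
qed

lemma primitive_on_combine:
  assumes "primitive_on y g u w" and "primitive_on y g w v"
  shows "primitive_on y g u v"
  unfolding primitive_on_def
proof (intro allI impI)
  fix s t assume st: "u \<le> s" "s \<le> t" "t \<le> v"
  consider "t \<le> w" | "w \<le> s" | "s < w" "w < t" by linarith
  then show "(g has_integral (y t - y s)) {s..t}"
  proof cases
    case 3
    have "(g has_integral ((y w - y s) + (y t - y w))) {s..t}"
      using primitive_onD[OF assms(1), of s w] primitive_onD[OF assms(2), of w t] st 3
      by (intro has_integral_combine[of s w t]) auto
    then show ?thesis by simp
  qed (use st assms in \<open>auto simp: primitive_on_def\<close>)
qed

lemma primitive_on_shift:
  "primitive_on y g u v \<Longrightarrow> primitive_on (\<lambda>x. y (x + d)) (\<lambda>x. g (x + d)) (u - d) (v - d)"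
  unfolding primitive_on_def[of "\<lambda>x. y (x + d)"]
proof (intro allI impI)
  fix s t assume "u - d \<le> s" "s \<le> t" "t \<le> v - d" "primitive_on y g u v"
  then have "(g has_integral (y (t + d) - y (s + d))) {s + d..t + d}"
    by (intro primitive_onD) auto
  then show "((\<lambda>x. g (x + d)) has_integral (y (t + d) - y (s + d))) {s..t}"
    using has_integral_shift_real_ivl[of g _ "s + d" "t + d" d] by simp
qed

lemma primitive_on_periodic:
  assumes "0 < T" and y_periodic: "\<And>x. y (x + T) = y x" and g_periodic: "\<And>x. g (x + T) = g x"
    and one_period: "primitive_on y g t0 (t0 + T)"
  shows "primitive_on y g u v"
proof -
  have y_back: "y (x - T) = y x" and g_back: "g (x - T) = g x" for x
    using y_periodic[of "x - T"] g_periodic[of "x - T"] by simp_all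
  have shift_left: "primitive_on y g (u - T) (v - T)" and shift_right: "primitive_on y g (u + T) (v + T)"
    if "primitive_on y g u v" for u v
  proof -
    show "primitive_on y g (u - T) (v - T)"
      using primitive_on_shift[OF that, of T] unfolding y_periodic g_periodic .
    show "primitive_on y g (u + T) (v + T)"
      using primitive_on_shift[OF that, of "- T"] by (simp add: y_back g_back)
  qed
  have periods: "primitive_on y g (t0 - real n * T) (t0 + real n * T + T)" for n
  proof (induction n)
    case 0
    then show ?case using one_period by simp
  next
    case (Suc n)
    let ?l = "t0 - real n * T" and ?r = "t0 + real n * T + T"
    have "primitive_on y g (?l - T) ?l"
      using primitive_on_subinterval[OF shift_left[OF Suc], of "?l - T" ?l] \<open>0 < T\<close> by simp
    moreover have "primitive_on y g ?r (?r + T)"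
      using primitive_on_subinterval[OF shift_right[OF Suc], of ?r "?r + T"] \<open>0 < T\<close> by simp
    ultimately have "primitive_on y g (?l - T) (?r + T)"
      using Suc by (blast intro: primitive_on_combine)
    then show ?case by (simp add: algebra_simps)
  qed
  obtain n :: nat where n: "max ((t0 - u) / T) ((v - t0) / T) \<le> real n"
    using real_arch_simple by blast
  have "t0 - real n * T \<le> u" "v \<le> t0 + real n * T + T"
    using n \<open>0 < T\<close> by (auto simp: field_simps)
  then show ?thesis by (rule primitive_on_subinterval[OF periods])
qed

lemma primitive_on_of_derivative:
  assumes "\<And>x. (y has_real_derivative g x) (at x)"
  shows "primitive_on y g u v"
  unfolding primitive_on_def
proof (intro allI impI)
  fix s t :: real assume "s \<le> t"
  then show "(g has_integral (y t - y s)) {s..t}"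
    using assms by (intro fundamental_theorem_of_calculus)
      (auto simp: has_real_derivative_iff_has_vector_derivative intro: has_vector_derivative_at_within)
qed

lemma primitive_on_increment_le:
  assumes "primitive_on y g u v" "u \<le> s" "s \<le> t" "t \<le> v" "\<And>x. x \<in> {s<..<t} \<Longrightarrow> g x \<le> c"
  shows "y t - y s \<le> c * (t - s)"
proof -
  have "((\<lambda>x. if x \<in> {s<..<t} then g x else c) has_integral (y t - y s)) {s..t}"
    by (rule has_integral_spike_finite[OF _ _ primitive_onD[OF assms(1-4)], of "{s, t}"]) auto
  moreover have "((\<lambda>x. c) has_integral (c * (t - s))) {s..t}"
    using has_integral_const_real[of c s t] assms(3) by (simp add: mult.commute)
  ultimately show ?thesis by (rule has_integral_le) (use assms(5) in auto)
qed

lemma primitive_on_increment_ge: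
  assumes "primitive_on y g u v" "u \<le> s" "s \<le> t" "t \<le> v" "\<And>x. x \<in> {s<..<t} \<Longrightarrow> c \<le> g x"
  shows "c * (t - s) \<le> y t - y s"
  using primitive_on_increment_le[OF primitive_on_uminus[OF assms(1)] assms(2-4), of "- c"] assms(5)
  by force

text \<open>After the last time before \<open>x\<close> at which \<open>y \<le> b\<close>, the function \<open>y\<close> cannot increase.\<close>
lemma primitive_on_stays_below:
  assumes prim: "primitive_on y g u v" and "y u \<le> b"
    and down: "\<And>x. x \<in> {u..v} \<Longrightarrow> b < y x \<Longrightarrow> g x \<le> 0" and x: "x \<in> {u..v}"
  shows "y x \<le> b"
proof (rule ccontr)
  assume above: "\<not> y x \<le> b"
  define S where "S = {t \<in> {u..x}. y t \<le> b}"
  have "continuous_on {u..x} y"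
    using primitive_on_continuous[OF primitive_on_subinterval[OF prim, of u x]] x by simp
  then have "closed S"
    unfolding S_def by (rule continuous_on_closed_Collect_le[OF _ continuous_on_const]) simp
  moreover have "u \<in> S" "bdd_above S" using \<open>y u \<le> b\<close> x by (auto simp: S_def)
  ultimately have "Sup S \<in> S" using closed_contains_Sup by blast
  define z where "z = Sup S"
  have z: "u \<le> z" "z < x" "y z \<le> b"
    using \<open>Sup S \<in> S\<close> above unfolding z_def S_def by (auto simp: le_less)
  have "b < y t" if "z < t" "t \<le> x" for t
  proof -
    have "t \<notin> S" using cSup_upper[OF _ \<open>bdd_above S\<close>, of t] that by (auto simp: z_def)
    then show ?thesis using that z by (auto simp: S_def)
  qed
  then have "y x - y z \<le> 0 * (x - z)"
    by (intro primitive_on_increment_le[OF prim]) (use z x down in auto)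
  then show False using z above by simp
qed

lemma primitive_on_stays_above:
  assumes "primitive_on y g u v" and "b \<le> y u"
    and "\<And>x. x \<in> {u..v} \<Longrightarrow> y x < b \<Longrightarrow> 0 \<le> g x" and "x \<in> {u..v}"
  shows "b \<le> y x"
  using primitive_on_stays_below[OF primitive_on_uminus[OF assms(1)], of "- b"] assms(2-4) by force

lemma abs_le_inverse_invariant:
  assumes prim: "primitive_on y g u v" and "0 < a" and "\<bar>y u\<bar> \<le> 1 / a"
    and bounds: "\<And>x. x \<in> {u..v} \<Longrightarrow> - 1 - a * y x \<le> g x \<and> g x \<le> 1 - a * y x"
    and x: "x \<in> {u..v}"
  shows "\<bar>y x\<bar> \<le> 1 / a"
proof -
  have "y x \<le> 1 / a"
  proof (rule primitive_on_stays_below[OF prim _ _ x])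
    fix t assume "t \<in> {u..v}" "1 / a < y t"
    then show "g t \<le> 0" using bounds[of t] \<open>0 < a\<close> by (simp add: field_simps)
  qed (use assms(3) in auto)
  moreover have "- 1 / a \<le> y x"
  proof (rule primitive_on_stays_above[OF prim _ _ x])
    fix t assume "t \<in> {u..v}" "y t < - 1 / a"
    then show "0 \<le> g t" using bounds[of t] \<open>0 < a\<close> by (simp add: field_simps)
  qed (use assms(3) in auto)
  ultimately show ?thesis by auto
qed

text \<open>Near \<open>v\<close> the lower bound \<open>L - a y\<close> of \<open>y'\<close> is close to \<open>L v > 0\<close>, so \<open>y\<close> increases
  strictly into its zero at \<open>v\<close> and must have been negative just before.\<close>
lemma primitive_on_not_zero_from_above:
  assumes prim: "primitive_on y g u v" and "u < v" and "y v = 0"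
    and nonneg: "\<And>x. x \<in> {u..v} \<Longrightarrow> 0 \<le> y x"
    and lower: "\<And>x. x \<in> {u..<v} \<Longrightarrow> L x - a * y x \<le> g x"
    and "continuous_on {u..v} L" and "0 < L v"
  shows False
proof -
  define h where "h x = L x - a * y x" for x
  have "continuous_on {u..v} h"
    unfolding h_def using assms(6) primitive_on_continuous[OF prim] by (intro continuous_intros)
  moreover have "v \<in> {u..v}" "0 < h v / 2" using \<open>u < v\<close> \<open>y v = 0\<close> \<open>0 < L v\<close> by (auto simp: h_def)
  ultimately obtain d where d: "0 < d" "\<And>x. x \<in> {u..v} \<Longrightarrow> dist x v < d \<Longrightarrow> dist (h x) (h v) < h v / 2"
    unfolding continuous_on_iff by metis
  define t where "t = max u (v - d / 2)"
  have t: "u \<le> t" "t < v" using \<open>u < v\<close> d(1) by (auto simp: t_def)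
  have "h v / 2 \<le> g x" if "x \<in> {t<..<v}" for x
  proof -
    have "dist (h x) (h v) < h v / 2" using d that t by (intro d(2)) (auto simp: t_def dist_real_def)
    then show ?thesis
      using lower[of x] that t \<open>y v = 0\<close> abs_ge_minus_self[of "h x - h v"]
      by (auto simp: h_def dist_real_def)
  qed
  then have "h v / 2 * (v - t) \<le> y v - y t"
    by (intro primitive_on_increment_ge[OF prim t(1)]) (use t in auto)
  moreover have "0 < h v / 2 * (v - t)" using \<open>0 < h v / 2\<close> t by simp
  ultimately show False using nonneg[of t] t \<open>y v = 0\<close> by simp
qed

lemma positive_after_zero:
  assumes prim: "primitive_on y g s m" and "y s = 0" and "0 \<le> a"
    and "continuous_on {s..m} L" and L_pos: "\<And>x. x \<in> {s<..<m} \<Longrightarrow> 0 < L x"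
    and lower: "\<And>x. x \<in> {s..m} \<Longrightarrow> L x - a * y x \<le> g x" and x: "x \<in> {s<..<m}"
  shows "0 < y x"
proof -
  have prim_x: "primitive_on y g s x" using primitive_on_subinterval[OF prim] x by simp
  have nonneg: "0 \<le> y t" if "t \<in> {s..x}" for t
  proof (rule primitive_on_stays_above[OF prim_x])
    fix t assume "t \<in> {s..x}" "y t < 0"
    then show "0 \<le> g t"
      using L_pos[of t] lower[of t] \<open>y s = 0\<close> \<open>0 \<le> a\<close> x mult_nonneg_nonpos[of a "y t"]
      by (cases "t = s") auto
  qed (use \<open>y s = 0\<close> that in auto)
  show ?thesis
  proof (rule ccontr)
    assume "\<not> 0 < y x"
    then have "y x = 0" using nonneg[of x] x by simp
    show False
      by (rule primitive_on_not_zero_from_above[OF prim_x, of L a])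
         (use x nonneg lower L_pos \<open>y x = 0\<close> assms(4) in \<open>auto intro: continuous_on_subset\<close>)
  qed
qed

lemma negative_after_zero:
  assumes "primitive_on y g s m" and "y s = 0" and "0 \<le> a"
    and "continuous_on {s..m} U" and "\<And>x. x \<in> {s<..<m} \<Longrightarrow> U x < 0"
    and "\<And>x. x \<in> {s..m} \<Longrightarrow> g x \<le> U x - a * y x" and "x \<in> {s<..<m}"
  shows "y x < 0"
  using positive_after_zero[OF primitive_on_uminus[OF assms(1)], of a "\<lambda>x. - U x" x] assms(2-7)
  by (force intro: continuous_intros)

lemma first_zero_after:
  fixes y :: "real \<Rightarrow> real"
  assumes cont: "continuous_on {s..e} y" and "s < m" "m \<le> e" "y e \<le> 0"
    and pos: "\<And>x. x \<in> {s<..<m} \<Longrightarrow> 0 < y x"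
  shows "\<exists>c\<in>{m..e}. y c = 0 \<and> (\<forall>x\<in>{s<..<c}. 0 < y x)"
proof -
  define S where "S = {x \<in> {m..e}. y x \<le> 0}"
  have "closed S" unfolding S_def
    by (rule continuous_on_closed_Collect_le[OF _ continuous_on_const])
       (use cont \<open>s < m\<close> in \<open>auto intro: continuous_on_subset\<close>)
  moreover have "e \<in> S" "bdd_below S" using assms by (auto simp: S_def)
  ultimately have "Inf S \<in> S" using closed_contains_Inf by blast
  define c where "c = Inf S"
  have c: "m \<le> c" "c \<le> e" "y c \<le> 0" using \<open>Inf S \<in> S\<close> by (auto simp: c_def S_def)
  have before: "0 < y x" if "x \<in> {s<..<c}" for x
  proof (cases "x < m")
    case False
    then have "x \<notin> S" using cInf_lower[OF _ \<open>bdd_below S\<close>, of x] that by (force simp: c_def)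
    then show ?thesis using False that c by (auto simp: S_def)
  qed (use that pos in auto)
  have "continuous_on {s..c} y" using cont c by (auto intro: continuous_on_subset)
  then have "0 \<le> y c"
    using continuous_ge_on_closure[of "{s<..<c}" y c 0] before \<open>s < m\<close> c by fastforce
  then show ?thesis using c before by (auto intro!: bexI[of _ c])
qed

lemma returns_to_zero:
  assumes prim: "primitive_on y g s e" and "s < m" "m \<le> u" "u \<le> e"
    and pos: "\<And>x. x \<in> {s<..<m} \<Longrightarrow> 0 < y x" and "y u \<le> b * (e - u)"
    and descent: "\<And>x. x \<in> {u<..<e} \<Longrightarrow> 0 < y x \<Longrightarrow> g x \<le> - b"
  shows "\<exists>c\<in>{m..e}. y c = 0 \<and> (\<forall>x\<in>{s<..<c}. 0 < y x)"
proof -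
  have "\<exists>x\<in>{u..e}. y x \<le> 0"
  proof (rule ccontr)
    assume "\<not> (\<exists>x\<in>{u..e}. y x \<le> 0)"
    then have all_pos: "0 < y x" if "x \<in> {u..e}" for x using that by (auto simp: not_le)
    have "y e - y u \<le> - b * (e - u)"
    proof (rule primitive_on_increment_le[OF prim])
      fix x assume x: "x \<in> {u<..<e}"
      then show "g x \<le> - b" using descent all_pos[of x] by auto
    qed (use assms in auto)
    then show False using all_pos[of e] \<open>y u \<le> b * (e - u)\<close> \<open>u \<le> e\<close> by auto
  qed
  then obtain x0 where x0: "x0 \<in> {u..e}" "y x0 \<le> 0" by blast
  have "continuous_on {s..x0} y"
    using primitive_on_continuous[OF prim] x0 by (auto intro: continuous_on_subset)
  then show ?thesis
    using first_zero_after[of s x0 y m] x0 pos assms(2-4) by fastforce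
qed

lemma returns_to_zero_from_below:
  assumes "primitive_on y g s e" and "s < m" "m \<le> u" "u \<le> e"
    and "\<And>x. x \<in> {s<..<m} \<Longrightarrow> y x < 0" and "- y u \<le> b * (e - u)"
    and "\<And>x. x \<in> {u<..<e} \<Longrightarrow> y x < 0 \<Longrightarrow> b \<le> g x"
  shows "\<exists>c\<in>{m..e}. y c = 0 \<and> (\<forall>x\<in>{s<..<c}. y x < 0)"
  using returns_to_zero[OF primitive_on_uminus[OF assms(1)] assms(2-4), of b] assms(5-7) by force

text \<open>A first zero of \<open>y\<close> after \<open>m\<close> would be reached from below against the negative forcing \<open>M\<close>.\<close>
lemma stays_negative:
  assumes prim: "primitive_on y g c e" and "c < m" and neg: "\<And>x. x \<in> {c<..<m} \<Longrightarrow> y x < 0"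
    and branch: "\<And>x. x \<in> {c..e} \<Longrightarrow> y x < 0 \<Longrightarrow> g x = M x - a * y x"
    and "continuous_on {c..e} M" and M_neg: "\<And>x. x \<in> {m..<e} \<Longrightarrow> M x < 0"
    and x: "x \<in> {c<..<e}"
  shows "y x < 0"
proof (rule ccontr)
  assume "\<not> y x < 0"
  moreover have "continuous_on {c..x} (\<lambda>x. - y x)"
    using primitive_on_continuous[OF prim] x by (auto intro!: continuous_intros intro: continuous_on_subset)
  moreover have "m \<le> x" using neg[of x] \<open>\<not> y x < 0\<close> x by force
  ultimately obtain z where z: "z \<in> {m..x}" "y z = 0" and before: "\<And>t. t \<in> {c<..<z} \<Longrightarrow> y t < 0"
    using first_zero_after[of c x "\<lambda>x. - y x" m] \<open>c < m\<close> neg by auto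
  define u where "u = (c + z) / 2"
  have "c < u" "u < z" using z \<open>c < m\<close> by (auto simp: u_def)
  have nonpos: "y t \<le> 0" if "t \<in> {u..z}" for t
    using before[of t] z that \<open>c < u\<close> by (cases "t = z") auto
  show False
  proof (rule primitive_on_not_zero_from_above[of "\<lambda>x. - y x" "\<lambda>x. - g x" u z "\<lambda>x. - M x" a])
    show "primitive_on (\<lambda>x. - y x) (\<lambda>x. - g x) u z"
      using primitive_on_uminus[OF prim] \<open>c < u\<close> z x by (auto intro: primitive_on_subinterval)
    show "continuous_on {u..z} (\<lambda>x. - M x)"
      using assms(5) \<open>c < u\<close> z x by (auto intro!: continuous_intros intro: continuous_on_subset)
    show "0 < - M z" using M_neg[of z] z x by auto
    fix t assume "t \<in> {u..<z}"
    then show "- M t - a * - y t \<le> - g t" using branch[of t] before[of t] \<open>c < u\<close> z x by auto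
  qed (use nonpos z \<open>u < z\<close> in auto)
qed

text \<open>\<open>exp (a t) D t\<close> has derivative zero, so it keeps its initial value \<open>0\<close>.\<close>
lemma linear_homogeneous_zero:
  assumes prim: "primitive_on D (\<lambda>x. - a * D x) u v" and "D u = 0" and t: "t \<in> {u..v}"
  shows "D t = 0"
proof -
  define I where "I x = integral {u..x} (\<lambda>x. - a * D x)" for x
  have cont: "continuous_on {u..v} (\<lambda>x. - a * D x)"
    using primitive_on_continuous[OF prim] by (intro continuous_intros)
  have I_eq: "I x = D x" if "x \<in> {u..v}" for x
    using integral_unique[OF primitive_onD[OF prim, of u x]] that \<open>D u = 0\<close> by (simp add: I_def)
  have "((\<lambda>x. exp (a * x) * I x) has_real_derivative 0) (at x within {u..v})" if x: "x \<in> {u..v}" for x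
  proof -
    have "(I has_real_derivative - a * D x) (at x within {u..v})"
      using integral_has_vector_derivative[OF cont x]
      by (simp add: I_def[abs_def] has_real_derivative_iff_has_vector_derivative)
    then have "((\<lambda>x. exp (a * x) * I x) has_real_derivative
        exp (a * x) * a * I x + exp (a * x) * (- a * D x)) (at x within {u..v})"
      by (auto intro!: derivative_eq_intros)
    then show ?thesis using I_eq[OF x] by (simp add: algebra_simps)
  qed
  then obtain k where "\<forall>x\<in>{u..v}. exp (a * x) * I x = k"
    using has_field_derivative_zero_constant[of "{u..v}" "\<lambda>x. exp (a * x) * I x"] by auto
  then have "exp (a * t) * I t = exp (a * u) * I u" using t by auto
  moreover have "I u = 0" by (simp add: I_def)
  ultimately show "D t = 0" using I_eq[OF t] by simp
qed

lemma first_zeros_coincide: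
  assumes prim1: "primitive_on y1 g1 u c1" and prim2: "primitive_on y2 g2 u c2"
    and "u < c1" "u < c2" "y1 u = y2 u" "y1 c1 = 0" "y2 c2 = 0"
    and nz1: "\<And>x. x \<in> {u<..<c1} \<Longrightarrow> y1 x \<noteq> 0" and nz2: "\<And>x. x \<in> {u<..<c2} \<Longrightarrow> y2 x \<noteq> 0"
    and eq1: "\<And>x. x \<in> {u<..<c1} \<Longrightarrow> g1 x = f x - a * y1 x"
    and eq2: "\<And>x. x \<in> {u<..<c2} \<Longrightarrow> g2 x = f x - a * y2 x"
  shows "c1 = c2 \<and> (\<forall>x\<in>{u..c1}. y1 x = y2 x)"
proof -
  define c where "c = min c1 c2"
  have "primitive_on (\<lambda>x. y1 x - y2 x) (\<lambda>x. g1 x - g2 x) u c"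
    using primitive_on_diff[OF primitive_on_subinterval[OF prim1, of u c]
        primitive_on_subinterval[OF prim2, of u c]] by (simp add: c_def)
  then have "primitive_on (\<lambda>x. y1 x - y2 x) (\<lambda>x. - a * (y1 x - y2 x)) u c"
  proof (rule primitive_on_cong)
    fix x assume "x \<in> {u<..<c}"
    then show "- a * (y1 x - y2 x) = g1 x - g2 x"
      using eq1[of x] eq2[of x] by (simp add: c_def right_diff_distrib)
  qed simp
  then have "y1 x - y2 x = 0" if "x \<in> {u..c}" for x
    by (rule linear_homogeneous_zero) (use that \<open>y1 u = y2 u\<close> in auto)
  then have agree: "y1 x = y2 x" if "x \<in> {u..c}" for x using that by simp
  have "\<not> c1 < c2"
  proof
    assume "c1 < c2"
    then have "y2 c1 = 0" using agree[of c1] \<open>u < c1\<close> \<open>y1 c1 = 0\<close> by (simp add: c_def)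
    then show False using nz2[of c1] \<open>u < c1\<close> \<open>c1 < c2\<close> by simp
  qed
  moreover have "\<not> c2 < c1"
  proof
    assume "c2 < c1"
    then have "y1 c2 = 0" using agree[of c2] \<open>u < c2\<close> \<open>y2 c2 = 0\<close> by (simp add: c_def)
    then show False using nz1[of c2] \<open>u < c2\<close> \<open>c2 < c1\<close> by simp
  qed
  ultimately show ?thesis using agree by (auto simp: c_def)
qed

section \<open>One excursion from the discontinuity line\<close>

text \<open>Solutions of the convexified inclusion. Besides Filippov solutions, these include the
  solutions of either linear equation \<open>y' = f_plus x - a y\<close> or \<open>y' = f_minus x - a y\<close>,
  whatever the sign of \<open>y\<close>.\<close>
definition hull_solution :: "real \<Rightarrow> (real \<Rightarrow> real) \<Rightarrow> (real \<Rightarrow> real) \<Rightarrow> real \<Rightarrow> real \<Rightarrow> bool" where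
  "hull_solution a y g u v \<longleftrightarrow> primitive_on y g u v \<and>
     (\<forall>x\<in>{u..v}. min (f_plus x) (f_minus x) - a * y x \<le> g x \<and>
                 g x \<le> max (f_plus x) (f_minus x) - a * y x)"

lemma hull_solution_subinterval:
  "hull_solution a y g u v \<Longrightarrow> u \<le> u' \<Longrightarrow> v' \<le> v \<Longrightarrow> hull_solution a y g u' v'"
  unfolding hull_solution_def by (auto intro: primitive_on_subinterval)

lemma hull_solution_abs_le:
  assumes "10 \<le> a" and hull: "hull_solution a y g u v" and "y u = 0" and x: "x \<in> {u..v}"
  shows "\<bar>y x\<bar> \<le> 1 / 10"
proof -
  have bounded: "\<bar>f_plus t\<bar> \<le> 1" "\<bar>f_minus t\<bar> \<le> 1" for t by (simp_all add: f_plus_def f_minus_def)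
  have "\<bar>y x\<bar> \<le> 1 / a"
  proof (rule abs_le_inverse_invariant[OF _ _ _ _ x])
    show "primitive_on y g u v" using hull by (simp add: hull_solution_def)
    fix t assume "t \<in> {u..v}"
    then show "- 1 - a * y t \<le> g t \<and> g t \<le> 1 - a * y t"
      using hull bounded[of t] unfolding hull_solution_def by (smt (verit) max_def min_def)
  qed (use assms in auto)
  also have "\<dots> \<le> 1 / 10" using assms(1) by (simp add: divide_simps)
  finally show ?thesis .
qed

lemma positive_arc_until_41_9:
  assumes "10 \<le> a" and hull: "hull_solution a y g s v" and "10/3 \<le> s" "s < 4" "41/9 \<le> v" "y s = 0"
  shows "\<exists>c\<in>{4..41/9}. y c = 0 \<and> (\<forall>x\<in>{s<..<c}. 0 < y x)"
proof -
  have prim: "primitive_on y g s v" and lower: "\<And>x. x \<in> {s..v} \<Longrightarrow> min (f_plus x) (f_minus x) - a * y x \<le> g x"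
    and upper: "\<And>x. x \<in> {s..v} \<Longrightarrow> g x \<le> max (f_plus x) (f_minus x) - a * y x"
    using hull by (auto simp: hull_solution_def)
  have pos: "0 < y x" if "x \<in> {s<..<4}" for x
  proof (rule positive_after_zero[of y g s 4 a "\<lambda>x. min (f_plus x) (f_minus x)"])
    show "primitive_on y g s 4" using primitive_on_subinterval[OF prim] \<open>41/9 \<le> v\<close> by simp
    show "0 < min (f_plus t) (f_minus t)" if "t \<in> {s<..<4}" for t
      using forcings_pos_before_4[of t] that \<open>10/3 \<le> s\<close> by simp
    show "min (f_plus t) (f_minus t) - a * y t \<le> g t" if "t \<in> {s..4}" for t
      using lower[of t] that \<open>41/9 \<le> v\<close> by simp
  qed (use assms that continuous_on_min_forcing in auto)
  show ?thesis
  proof (rule returns_to_zero[of y g s "41/9" 4 "13/3" "1/2"])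
    show "primitive_on y g s (41/9)" using primitive_on_subinterval[OF prim] \<open>41/9 \<le> v\<close> by simp
    show "y (13/3) \<le> 1/2 * (41/9 - 13/3)"
      using hull_solution_abs_le[OF \<open>10 \<le> a\<close> hull \<open>y s = 0\<close>, of "13/3"] assms(3-5) by simp
    show "g x \<le> - (1/2)" if "x \<in> {13/3<..<41/9}" "0 < y x" for x
    proof -
      have "0 < a * y x" using that \<open>10 \<le> a\<close> by simp
      then show ?thesis
        using upper[of x] forcings_le_neg_half[of x] that assms(3-5) by (simp add: max_def split: if_split_asm)
    qed
  qed (use assms pos in auto)
qed

lemma negative_arc_until_59_9:
  assumes "10 \<le> a" and hull: "hull_solution a y g c v" and "4 \<le> c" "c \<le> 41/9" "59/9 \<le> v" "y c = 0"
    and branch: "\<And>x. x \<in> {c..v} \<Longrightarrow> y x < 0 \<Longrightarrow> g x = f_minus x - a * y x"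
  shows "\<exists>c'\<in>{6..59/9}. y c' = 0 \<and> (\<forall>x\<in>{c<..<c'}. y x < 0)"
proof -
  have prim: "primitive_on y g c v"
    and upper: "\<And>x. x \<in> {c..v} \<Longrightarrow> g x \<le> max (f_plus x) (f_minus x) - a * y x"
    using hull by (auto simp: hull_solution_def)
  have prim6: "primitive_on y g c 6" using primitive_on_subinterval[OF prim] \<open>59/9 \<le> v\<close> by simp
  have neg_start: "y x < 0" if "x \<in> {c<..<14/3}" for x
  proof (rule negative_after_zero[of y g c "14/3" a "\<lambda>x. max (f_plus x) (f_minus x)"])
    show "primitive_on y g c (14/3)" using primitive_on_subinterval[OF prim] \<open>59/9 \<le> v\<close> by simp
    show "max (f_plus t) (f_minus t) < 0" if "t \<in> {c<..<14/3}" for t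
      using forcings_neg_after_4[of t] that \<open>4 \<le> c\<close> by simp
    show "g t \<le> max (f_plus t) (f_minus t) - a * y t" if "t \<in> {c..14/3}" for t
      using upper[of t] that \<open>59/9 \<le> v\<close> by simp
  qed (use assms that continuous_on_max_forcing in auto)
  have neg: "y x < 0" if "x \<in> {c<..<6}" for x
  proof (rule stays_negative[of y g c 6 "14/3" f_minus a])
    show "g t = f_minus t - a * y t" if "t \<in> {c..6}" "y t < 0" for t
      using branch[of t] that \<open>59/9 \<le> v\<close> by simp
    show "f_minus t < 0" if "t \<in> {14/3..<6}" for t
      using f_minus_neg_after_4[of t] that by simp
  qed (use assms that prim6 neg_start continuous_on_f_minus in auto)
  show ?thesis
  proof (rule returns_to_zero_from_below[of y g c "59/9" 6 "19/3" "1/2"])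
    show "primitive_on y g c (59/9)" using primitive_on_subinterval[OF prim] \<open>59/9 \<le> v\<close> by simp
    show "- y (19/3) \<le> 1/2 * (59/9 - 19/3)"
      using hull_solution_abs_le[OF \<open>10 \<le> a\<close> hull \<open>y c = 0\<close>, of "19/3"] assms(3-5) by simp
    show "1/2 \<le> g x" if "x \<in> {19/3<..<59/9}" "y x < 0" for x
      using branch[of x] f_minus_ge_half[of x] that assms(1,3-5) mult_pos_neg[of a "y x"] by simp
  qed (use assms neg in auto)
qed

lemma positive_arc_until_65_9:
  assumes "10 \<le> a" and hull: "hull_solution a y g c v" and "6 \<le> c" "c \<le> 59/9" "65/9 \<le> v" "y c = 0"
    and branch: "\<And>x. x \<in> {c..v} \<Longrightarrow> 0 < y x \<Longrightarrow> g x = f_plus x - a * y x"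
  shows "\<exists>c'\<in>{20/3..65/9}. y c' = 0 \<and> (\<forall>x\<in>{c<..<c'}. 0 < y x)"
proof -
  have prim: "primitive_on y g c v"
    and lower: "\<And>x. x \<in> {c..v} \<Longrightarrow> min (f_plus x) (f_minus x) - a * y x \<le> g x"
    using hull by (auto simp: hull_solution_def)
  have pos: "0 < y x" if "x \<in> {c<..<20/3}" for x
  proof (rule positive_after_zero[of y g c "20/3" a "\<lambda>x. min (f_plus x) (f_minus x)"])
    show "primitive_on y g c (20/3)" using primitive_on_subinterval[OF prim] \<open>65/9 \<le> v\<close> by simp
    show "0 < min (f_plus t) (f_minus t)" if "t \<in> {c<..<20/3}" for t
      using forcings_pos_after_6[of t] that \<open>6 \<le> c\<close> by simp
    show "min (f_plus t) (f_minus t) - a * y t \<le> g t" if "t \<in> {c..20/3}" for t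
      using lower[of t] that \<open>65/9 \<le> v\<close> by simp
  qed (use assms that continuous_on_min_forcing in auto)
  show ?thesis
  proof (rule returns_to_zero[of y g c "65/9" "20/3" "61/9" "1/2"])
    show "primitive_on y g c (65/9)" using primitive_on_subinterval[OF prim] \<open>65/9 \<le> v\<close> by simp
    show "y (61/9) \<le> 1/2 * (65/9 - 61/9)"
      using hull_solution_abs_le[OF \<open>10 \<le> a\<close> hull \<open>y c = 0\<close>, of "61/9"] assms(3-5) by simp
    show "g x \<le> - (1/2)" if "x \<in> {61/9<..<65/9}" "0 < y x" for x
    proof -
      have "0 < a * y x" using that \<open>10 \<le> a\<close> by simp
      then show ?thesis using branch[of x] f_plus_le_neg_half[of x] that assms(3-5) by simp
    qed
  qed (use assms pos in auto)
qed

definition filippov_on :: "real \<Rightarrow> (real \<Rightarrow> real) \<Rightarrow> (real \<Rightarrow> real) \<Rightarrow> real \<Rightarrow> real \<Rightarrow> bool" where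
  "filippov_on a y g u v \<longleftrightarrow> primitive_on y g u v \<and> (\<forall>x\<in>{u..v}. g x \<in> filippov_rhs a x (y x))"

lemma filippov_on_subinterval:
  "filippov_on a y g u v \<Longrightarrow> u \<le> u' \<Longrightarrow> v' \<le> v \<Longrightarrow> filippov_on a y g u' v'"
  unfolding filippov_on_def by (auto intro: primitive_on_subinterval)

lemma filippov_on_hull_solution: "filippov_on a y g u v \<Longrightarrow> hull_solution a y g u v"
  unfolding filippov_on_def hull_solution_def by (auto dest: filippov_rhs_hull)

lemma filippov_on_pos:
  "filippov_on a y g u v \<Longrightarrow> x \<in> {u..v} \<Longrightarrow> 0 < y x \<Longrightarrow> g x = f_plus x - a * y x"
  unfolding filippov_on_def using filippov_rhs_pos by blast

lemma filippov_on_neg: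
  "filippov_on a y g u v \<Longrightarrow> x \<in> {u..v} \<Longrightarrow> y x < 0 \<Longrightarrow> g x = f_minus x - a * y x"
  unfolding filippov_on_def using filippov_rhs_neg by blast

lemma filippov_on_stays_zero:
  assumes fil: "filippov_on a y g u v" and "0 \<le> a" "y u = 0"
    and attracting: "\<And>x. x \<in> {u..v} \<Longrightarrow> f_plus x \<le> 0 \<and> 0 \<le> f_minus x" and x: "x \<in> {u..v}"
  shows "y x = 0"
proof -
  have prim: "primitive_on y g u v" using fil by (simp add: filippov_on_def)
  have "y x \<le> 0"
  proof (rule primitive_on_stays_below[OF prim _ _ x])
    fix t assume t: "t \<in> {u..v}" "0 < y t"
    have "0 \<le> a * y t" using \<open>0 \<le> a\<close> t(2) by simp
    then show "g t \<le> 0" using filippov_on_pos[OF fil t] attracting[OF t(1)] by simp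
  qed (use \<open>y u = 0\<close> in simp)
  moreover have "0 \<le> y x"
  proof (rule primitive_on_stays_above[OF prim _ _ x])
    fix t assume t: "t \<in> {u..v}" "y t < 0"
    have "a * y t \<le> 0" using \<open>0 \<le> a\<close> t(2) by (simp add: mult_nonneg_nonpos)
    then show "0 \<le> g t" using filippov_on_neg[OF fil t] attracting[OF t(1)] by simp
  qed (use \<open>y u = 0\<close> in simp)
  ultimately show ?thesis by simp
qed

lemma filippov_on_excursion:
  assumes "10 \<le> a" and fil: "filippov_on a y g s (22/3)" and "10/3 \<le> s" "s < 4" "y s = 0"
  obtains c1 c2 c3 where "c1 \<in> {4..41/9}" "c2 \<in> {6..59/9}" "c3 \<in> {20/3..65/9}"
    "y c1 = 0" "y c2 = 0" "\<forall>x\<in>{s<..<c1}. 0 < y x" "\<forall>x\<in>{c1<..<c2}. y x < 0"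
    "\<forall>x\<in>{c2<..<c3}. 0 < y x" "\<forall>x\<in>{c3..22/3}. y x = 0"
proof -
  have hull: "hull_solution a y g s (22/3)" using fil by (rule filippov_on_hull_solution)
  obtain c1 where c1: "c1 \<in> {4..41/9}" "y c1 = 0" "\<forall>x\<in>{s<..<c1}. 0 < y x"
    using positive_arc_until_41_9[OF \<open>10 \<le> a\<close> hull] assms(3-5) by auto
  obtain c2 where c2: "c2 \<in> {6..59/9}" "y c2 = 0" "\<forall>x\<in>{c1<..<c2}. y x < 0"
  proof -
    have "hull_solution a y g c1 (22/3)" using hull_solution_subinterval[OF hull, of c1] c1 assms(3,4) by simp
    then show thesis
      using negative_arc_until_59_9[of a y g c1 "22/3"] filippov_on_neg[OF fil] c1 assms(1,3,4) that
      by auto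
  qed
  obtain c3 where c3: "c3 \<in> {20/3..65/9}" "y c3 = 0" "\<forall>x\<in>{c2<..<c3}. 0 < y x"
  proof -
    have "hull_solution a y g c2 (22/3)" using hull_solution_subinterval[OF hull, of c2] c1 c2 assms(3,4) by simp
    then show thesis
      using positive_arc_until_65_9[of a y g c2 "22/3"] filippov_on_pos[OF fil] c1 c2 assms(1,3,4) that
      by auto
  qed
  have "y x = 0" if "x \<in> {c3..22/3}" for x
  proof (rule filippov_on_stays_zero[OF filippov_on_subinterval[OF fil, of c3 "22/3"] _ c3(2) _ that])
    show "f_plus t \<le> 0 \<and> 0 \<le> f_minus t" if "t \<in> {c3..22/3}" for t
      using forcings_attracting_closed[of t] that c3(1) by simp
  qed (use c1 c2 c3 assms in auto)
  then show thesis using that c1 c2 c3 by blast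
qed

lemma filippov_on_zero_at_22_3:
  assumes "10 \<le> a" "filippov_on a y g s (22/3)" "10/3 \<le> s" "s < 4" "y s = 0"
  shows "y (22/3) = 0"
proof (rule filippov_on_excursion[OF assms])
  fix c1 c2 c3 :: real
  assume "c1 \<in> {4..41/9}" "c2 \<in> {6..59/9}" "c3 \<in> {20/3..65/9}" "y c1 = 0" "y c2 = 0"
    "\<forall>x\<in>{s<..<c1}. 0 < y x" "\<forall>x\<in>{c1<..<c2}. y x < 0" "\<forall>x\<in>{c2<..<c3}. 0 < y x"
    "\<forall>x\<in>{c3..22/3}. y x = 0"
  then show "y (22/3) = 0" by simp
qed

lemma filippov_on_first_zeros_coincide:
  assumes fil1: "filippov_on a y1 g1 u v" and fil2: "filippov_on a y2 g2 u v"
    and "u < c1" "c1 \<le> v" "u < c2" "c2 \<le> v" "y1 u = y2 u" "y1 c1 = 0" "y2 c2 = 0"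
    and same_sign: "(\<forall>x\<in>{u<..<c1}. 0 < y1 x) \<and> (\<forall>x\<in>{u<..<c2}. 0 < y2 x) \<or>
                    (\<forall>x\<in>{u<..<c1}. y1 x < 0) \<and> (\<forall>x\<in>{u<..<c2}. y2 x < 0)"
  shows "c1 = c2 \<and> (\<forall>x\<in>{u..c1}. y1 x = y2 x)"
proof -
  have prim1: "primitive_on y1 g1 u c1" and prim2: "primitive_on y2 g2 u c2"
    using fil1 fil2 assms(4,6) by (auto simp: filippov_on_def intro: primitive_on_subinterval)
  from same_sign show ?thesis
  proof (elim disjE conjE)
    assume pos1: "\<forall>x\<in>{u<..<c1}. 0 < y1 x" and pos2: "\<forall>x\<in>{u<..<c2}. 0 < y2 x"
    show ?thesis
    proof (rule first_zeros_coincide[OF prim1 prim2, where f = f_plus and a = a])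
      show "g1 x = f_plus x - a * y1 x" if "x \<in> {u<..<c1}" for x
        using filippov_on_pos[OF fil1, of x] pos1 that assms(4) by simp
      show "g2 x = f_plus x - a * y2 x" if "x \<in> {u<..<c2}" for x
        using filippov_on_pos[OF fil2, of x] pos2 that assms(6) by simp
    qed (use assms pos1 pos2 in \<open>auto simp: less_imp_neq[symmetric]\<close>)
  next
    assume neg1: "\<forall>x\<in>{u<..<c1}. y1 x < 0" and neg2: "\<forall>x\<in>{u<..<c2}. y2 x < 0"
    show ?thesis
    proof (rule first_zeros_coincide[OF prim1 prim2, where f = f_minus and a = a])
      show "g1 x = f_minus x - a * y1 x" if "x \<in> {u<..<c1}" for x
        using filippov_on_neg[OF fil1, of x] neg1 that assms(4) by simp
      show "g2 x = f_minus x - a * y2 x" if "x \<in> {u<..<c2}" for x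
        using filippov_on_neg[OF fil2, of x] neg2 that assms(6) by simp
    qed (use assms neg1 neg2 in \<open>auto simp: less_imp_neq\<close>)
  qed
qed

lemma filippov_on_unique_on_period:
  assumes "10 \<le> a" and fil1: "filippov_on a y1 g1 s (22/3)" and fil2: "filippov_on a y2 g2 s (22/3)"
    and "10/3 \<le> s" "s < 4" "y1 s = 0" "y2 s = 0" and x: "x \<in> {s..22/3}"
  shows "y1 x = y2 x"
proof -
  obtain c1 c2 c3 where c: "c1 \<in> {4..41/9}" "c2 \<in> {6..59/9}" "c3 \<in> {20/3..65/9}" "y1 c1 = 0" "y1 c2 = 0"
    and arcs1: "\<forall>x\<in>{s<..<c1}. 0 < y1 x" "\<forall>x\<in>{c1<..<c2}. y1 x < 0" "\<forall>x\<in>{c2<..<c3}. 0 < y1 x"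
    and rest1: "\<forall>x\<in>{c3..22/3}. y1 x = 0"
    by (rule filippov_on_excursion[OF \<open>10 \<le> a\<close> fil1 assms(4,5,6)])
  obtain d1 d2 d3 where d: "d1 \<in> {4..41/9}" "d2 \<in> {6..59/9}" "d3 \<in> {20/3..65/9}" "y2 d1 = 0" "y2 d2 = 0"
    and arcs2: "\<forall>x\<in>{s<..<d1}. 0 < y2 x" "\<forall>x\<in>{d1<..<d2}. y2 x < 0" "\<forall>x\<in>{d2<..<d3}. 0 < y2 x"
    and rest2: "\<forall>x\<in>{d3..22/3}. y2 x = 0"
    by (rule filippov_on_excursion[OF \<open>10 \<le> a\<close> fil2 assms(4,5,7)])
  have m1: "c1 = d1 \<and> (\<forall>x\<in>{s..c1}. y1 x = y2 x)"
    by (rule filippov_on_first_zeros_coincide[OF fil1 fil2]) (use c d arcs1 arcs2 assms(5-7) in auto)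
  have m2: "c2 = d2 \<and> (\<forall>x\<in>{c1..c2}. y1 x = y2 x)"
    by (rule filippov_on_first_zeros_coincide[OF filippov_on_subinterval[OF fil1, of c1 "22/3"]
          filippov_on_subinterval[OF fil2, of c1 "22/3"]]) (use c d m1 arcs1 arcs2 assms(5) in auto)
  have m3: "c3 = d3 \<and> (\<forall>x\<in>{c2..c3}. y1 x = y2 x)"
  proof (rule filippov_on_first_zeros_coincide[OF filippov_on_subinterval[OF fil1, of c2 "22/3"]
          filippov_on_subinterval[OF fil2, of c2 "22/3"]])
    show "y1 c3 = 0" "y2 d3 = 0" using c(3) d(3) rest1 rest2 by auto
  qed (use c d m1 m2 arcs1 arcs2 assms(5) in auto)
  consider "x \<le> c1" | "c1 \<le> x" "x \<le> c2" | "c2 \<le> x" "x \<le> c3" | "c3 \<le> x" by linarith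
  then show ?thesis
  proof cases
    case 4
    then show ?thesis using rest1 rest2 m3 x by auto
  qed (use m1 m2 m3 x in auto)
qed

section \<open>Construction of solutions\<close>

text \<open>The solution of \<open>y' = - sin (w x) - a y\<close> with \<open>y u = 0\<close>.\<close>
definition sine_response :: "real \<Rightarrow> real \<Rightarrow> real \<Rightarrow> real \<Rightarrow> real" where
  "sine_response a w u x =
     (w * cos (w * x) - a * sin (w * x) - (w * cos (w * u) - a * sin (w * u)) * exp (a * (u - x)))
       / (a\<^sup>2 + w\<^sup>2)"

lemma sine_response_start [simp]: "sine_response a w u u = 0"
  by (simp add: sine_response_def)

lemma sine_response_deriv:
  assumes "0 < w"
  shows "(sine_response a w u has_real_derivative - sin (w * x) - a * sine_response a w u x) (at x)"
proof -
  define K where "K = w * cos (w * u) - a * sin (w * u)"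
  have nonzero: "a * a + w * w \<noteq> 0" using assms by (simp add: add_nonneg_pos)
  have "((\<lambda>x. w * cos (w * x) - a * sin (w * x) - K * exp (a * (u - x))) has_real_derivative
      - (w * w) * sin (w * x) - a * w * cos (w * x) + a * K * exp (a * (u - x))) (at x)"
    by (auto intro!: derivative_eq_intros simp: algebra_simps)
  then have "(sine_response a w u has_real_derivative
      (- (w * w) * sin (w * x) - a * w * cos (w * x) + a * K * exp (a * (u - x))) / (a\<^sup>2 + w\<^sup>2)) (at x)"
    unfolding sine_response_def[abs_def] K_def[symmetric] by (rule DERIV_cdivide)
  moreover have "(- (w * w) * sin (w * x) - a * w * cos (w * x) + a * K * exp (a * (u - x))) / (a\<^sup>2 + w\<^sup>2)
      = - sin (w * x) - a * sine_response a w u x"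
    using nonzero by (simp add: sine_response_def K_def power2_eq_square field_simps)
  ultimately show ?thesis by simp
qed

lemma f_plus_eq_sine: "f_plus x = - sin (3 * pi / 2 * x)"
  and f_minus_eq_sine: "f_minus x = - sin (pi / 2 * x)"
  by (simp_all add: f_plus_def f_minus_def)

lemma hull_solution_sine_response:
  "hull_solution a (sine_response a (3 * pi / 2) u) (\<lambda>x. f_plus x - a * sine_response a (3 * pi / 2) u x) s v"
  "hull_solution a (sine_response a (pi / 2) u) (\<lambda>x. f_minus x - a * sine_response a (pi / 2) u x) s v"
proof -
  have "(sine_response a (3 * pi / 2) u has_real_derivative f_plus x - a * sine_response a (3 * pi / 2) u x) (at x)"
    "(sine_response a (pi / 2) u has_real_derivative f_minus x - a * sine_response a (pi / 2) u x) (at x)" for x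
    using sine_response_deriv[of "3 * pi / 2" a u x] sine_response_deriv[of "pi / 2" a u x]
    by (simp_all only: f_plus_eq_sine f_minus_eq_sine) simp_all
  then show "hull_solution a (sine_response a (3 * pi / 2) u) (\<lambda>x. f_plus x - a * sine_response a (3 * pi / 2) u x) s v"
    "hull_solution a (sine_response a (pi / 2) u) (\<lambda>x. f_minus x - a * sine_response a (pi / 2) u x) s v"
    unfolding hull_solution_def by (auto intro!: primitive_on_of_derivative)
qed

lemma filippov_on_zero:
  assumes "\<And>x. x \<in> {u<..<v} \<Longrightarrow> f_plus x < 0 \<and> 0 < f_minus x"
  shows "filippov_on a (\<lambda>_. 0) (\<lambda>x. filippov_sel a x 0) u v"
  unfolding filippov_on_def
proof (intro conjI ballI filippov_sel_in_rhs)
  have "primitive_on (\<lambda>_. 0) (\<lambda>_. 0) u v" by (simp add: primitive_on_def)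
  then show "primitive_on (\<lambda>_. 0) (\<lambda>x. filippov_sel a x 0) u v"
    by (rule primitive_on_cong) (use assms in \<open>auto simp: filippov_sel_def\<close>)
qed

lemma filippov_on_glue:
  assumes fil1: "filippov_on a y1 g1 u w" and fil2: "filippov_on a y2 g2 w v" and "y1 w = y2 w"
  shows "filippov_on a (\<lambda>x. if x \<le> w then y1 x else y2 x) (\<lambda>x. if x < w then g1 x else g2 x) u v"
  unfolding filippov_on_def
proof (intro conjI ballI)
  have prim1: "primitive_on y1 g1 u w" and prim2: "primitive_on y2 g2 w v"
    using fil1 fil2 by (simp_all add: filippov_on_def)
  have "primitive_on (\<lambda>x. if x \<le> w then y1 x else y2 x) (\<lambda>x. if x < w then g1 x else g2 x) u w"
    by (rule primitive_on_cong[OF prim1]) auto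
  moreover have "primitive_on (\<lambda>x. if x \<le> w then y1 x else y2 x) (\<lambda>x. if x < w then g1 x else g2 x) w v"
    by (rule primitive_on_cong[OF prim2]) (use \<open>y1 w = y2 w\<close> in auto)
  ultimately show "primitive_on (\<lambda>x. if x \<le> w then y1 x else y2 x) (\<lambda>x. if x < w then g1 x else g2 x) u v"
    by (rule primitive_on_combine)
  fix x assume x: "x \<in> {u..v}"
  show "(if x < w then g1 x else g2 x) \<in> filippov_rhs a x (if x \<le> w then y1 x else y2 x)"
  proof (cases "x < w")
    case True
    then show ?thesis using fil1 x by (simp add: filippov_on_def)
  next
    case False
    then have "g2 x \<in> filippov_rhs a x (y2 x)" using fil2 x by (simp add: filippov_on_def)
    then show ?thesis using False \<open>y1 w = y2 w\<close> by (cases "x = w") auto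
  qed
qed

lemma filippov_on_shift:
  assumes "filippov_on a y g u v"
  shows "filippov_on a (\<lambda>x. y (x + 4)) (\<lambda>x. g (x + 4)) (u - 4) (v - 4)"
  unfolding filippov_on_def
proof (intro conjI ballI)
  show "primitive_on (\<lambda>x. y (x + 4)) (\<lambda>x. g (x + 4)) (u - 4) (v - 4)"
    using assms primitive_on_shift[of y g u v 4] by (simp add: filippov_on_def)
  fix x assume "x \<in> {u - 4..v - 4}"
  then have "g (x + 4) \<in> filippov_rhs a (x + 4) (y (x + 4))" using assms by (simp add: filippov_on_def)
  then show "g (x + 4) \<in> filippov_rhs a x (y (x + 4))" by (simp add: filippov_rhs_periodic)
qed

lemma filippov_on_exists_from_zero:
  assumes "10 \<le> a" "10/3 \<le> s" "s < 4"
  obtains Q where "Q s = 0" "\<forall>x\<in>{65/9..22/3}. Q x = 0"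
    "filippov_on a Q (\<lambda>x. filippov_sel a x (Q x)) s (22/3)"
proof -
  define E1 where "E1 = sine_response a (3 * pi / 2) s"
  obtain c1 where c1: "c1 \<in> {4..41/9}" "E1 c1 = 0" "\<And>x. x \<in> {s<..<c1} \<Longrightarrow> 0 < E1 x"
    using positive_arc_until_41_9[OF \<open>10 \<le> a\<close> hull_solution_sine_response(1)[of a s s "22/3"]] assms(2,3)
    by (auto simp: E1_def)
  define E2 where "E2 = sine_response a (pi / 2) c1"
  obtain c2 where c2: "c2 \<in> {6..59/9}" "E2 c2 = 0" "\<And>x. x \<in> {c1<..<c2} \<Longrightarrow> E2 x < 0"
    using negative_arc_until_59_9[OF \<open>10 \<le> a\<close> hull_solution_sine_response(2)[of a c1 c1 "22/3"]] c1
    by (auto simp: E2_def)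
  define E3 where "E3 = sine_response a (3 * pi / 2) c2"
  obtain c3 where c3: "c3 \<in> {20/3..65/9}" "E3 c3 = 0" "\<And>x. x \<in> {c2<..<c3} \<Longrightarrow> 0 < E3 x"
    using positive_arc_until_65_9[OF \<open>10 \<le> a\<close> hull_solution_sine_response(1)[of a c2 c2 "22/3"]] c2
    by (auto simp: E3_def)
  define Q where "Q x = (if x \<le> c1 then E1 x else if x \<le> c2 then E2 x else if x \<le> c3 then E3 x else 0)"
    for x
  define G where "G x = filippov_sel a x (Q x)" for x
  have prim_E: "primitive_on E1 (\<lambda>x. f_plus x - a * E1 x) u v"
    "primitive_on E2 (\<lambda>x. f_minus x - a * E2 x) u v" "primitive_on E3 (\<lambda>x. f_plus x - a * E3 x) u v" for u v
    using hull_solution_sine_response[of a] by (simp_all add: hull_solution_def E1_def E2_def E3_def)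
  have order: "c1 < c2" "c2 < c3" using c1(1) c2(1) c3(1) by auto
  have Q_zero: "Q x = 0" if "x \<in> {c3..22/3}" for x
    using that c3(2) order by (cases "x = c3") (simp_all add: Q_def)
  have "primitive_on Q G s c1"
  proof (rule primitive_on_cong[OF prim_E(1)])
    show "Q x = E1 x" if "x \<in> {s..c1}" for x using that by (simp add: Q_def)
    show "G x = f_plus x - a * E1 x" if "x \<in> {s<..<c1}" for x
      using that c1(3)[OF that] by (simp add: G_def Q_def filippov_sel_def)
  qed
  moreover have "primitive_on Q G c1 c2"
  proof (rule primitive_on_cong[OF prim_E(2)])
    show "Q x = E2 x" if "x \<in> {c1..c2}" for x
      using that c1(2) by (cases "x = c1") (simp_all add: Q_def E2_def)
    show "G x = f_minus x - a * E2 x" if "x \<in> {c1<..<c2}" for x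
      using that c2(3)[OF that] by (simp add: G_def Q_def filippov_sel_def)
  qed
  moreover have "primitive_on Q G c2 c3"
  proof (rule primitive_on_cong[OF prim_E(3)])
    show "Q x = E3 x" if "x \<in> {c2..c3}" for x
      using that c2(2) order by (cases "x = c2") (simp_all add: Q_def E3_def)
    show "G x = f_plus x - a * E3 x" if "x \<in> {c2<..<c3}" for x
      using that c3(3)[OF that] order by (simp add: G_def Q_def filippov_sel_def)
  qed
  moreover have "primitive_on Q G c3 (22/3)"
  proof (rule primitive_on_cong)
    show "primitive_on (\<lambda>_. 0) (\<lambda>x. filippov_sel a x 0) c3 (22/3)"
      using filippov_on_zero[of c3 "22/3" a] forcings_attracting c3(1) by (simp add: filippov_on_def)
    show "G x = filippov_sel a x 0" if "x \<in> {c3<..<22/3}" for x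
      using Q_zero that by (simp add: G_def)
  qed (use Q_zero in simp)
  ultimately have "primitive_on Q G s (22/3)" by (blast intro: primitive_on_combine)
  then have "filippov_on a Q G s (22/3)" by (simp add: filippov_on_def G_def filippov_sel_in_rhs)
  moreover have "Q s = 0" using c1(1) assms(3) by (simp add: Q_def E1_def)
  moreover have "\<forall>x\<in>{65/9..22/3}. Q x = 0" using Q_zero c3(1) by auto
  ultimately show thesis using that by (simp add: G_def[abs_def])
qed

section \<open>Solutions on half-lines\<close>

lemma filippov_sol_iff: "filippov_sol a y x0 \<longleftrightarrow> (\<exists>g. \<forall>v. filippov_on a y g x0 v)"
proof
  assume "filippov_sol a y x0"
  then obtain g where sel: "\<forall>x\<ge>x0. g x \<in> filippov_rhs a x (y x)"
    and int: "\<forall>x\<ge>x0. (g has_integral (y x - y x0)) {x0..x}"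
    unfolding filippov_sol_def by blast
  have "filippov_on a y g x0 v" for v
    unfolding filippov_on_def primitive_on_iff_from_start using sel int by simp
  then show "\<exists>g. \<forall>v. filippov_on a y g x0 v" by blast
next
  assume "\<exists>g. \<forall>v. filippov_on a y g x0 v"
  then obtain g where fil: "\<And>v. filippov_on a y g x0 v" by blast
  show "filippov_sol a y x0"
    unfolding filippov_sol_def
  proof (intro exI[of _ g] conjI allI impI)
    fix x assume "x0 \<le> x"
    have prim: "primitive_on y g x0 x" and sel: "\<forall>t\<in>{x0..x}. g t \<in> filippov_rhs a t (y t)"
      using fil[of x] by (simp_all add: filippov_on_def)
    then show "g x \<in> filippov_rhs a x (y x)" using \<open>x0 \<le> x\<close> by simp
    show int: "(g has_integral (y x - y x0)) {x0..x}" using primitive_onD[OF prim] \<open>x0 \<le> x\<close> by simp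
    have "compact (y ` {x0..x})"
      by (rule compact_continuous_image[OF primitive_on_continuous[OF prim] compact_Icc])
    then obtain B where B: "\<And>t. t \<in> {x0..x} \<Longrightarrow> \<bar>y t\<bar> \<le> B"
      using compact_imp_bounded[of "y ` {x0..x}"] unfolding bounded_real by blast
    show "g absolutely_integrable_on {x0..x}"
    proof (rule absolutely_integrable_integrable_bound[where g = "\<lambda>_. \<bar>a\<bar> * B + 1"])
      fix t assume t: "t \<in> {x0..x}"
      have "\<bar>g t\<bar> \<le> \<bar>a * y t\<bar> + 1" using sel t by (intro filippov_rhs_abs_le[of _ a t]) simp
      also have "\<dots> \<le> \<bar>a\<bar> * B + 1" using B[OF t] by (simp add: abs_mult mult_left_mono)
      finally show "norm (g t) \<le> \<bar>a\<bar> * B + 1" by simp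
    qed (use int in auto)
  qed
qed

lemma filippov_unique_after_10_3:
  assumes "10 \<le> a" and "\<And>v. filippov_on a y g (10/3) v" and "\<And>v. filippov_on a z h (10/3) v"
    and "y (10/3) = 0" "z (10/3) = 0" and "10/3 \<le> x"
  shows "y x = z x"
proof -
  have "\<forall>x\<in>{10/3..10/3 + 4 * real n}. y x = z x"
    if "\<And>v. filippov_on a y g (10/3) v" "\<And>v. filippov_on a z h (10/3) v" "y (10/3) = 0" "z (10/3) = 0"
    for n y g z h
    using that
  proof (induction n arbitrary: y g z h)
    case 0
    then show ?case by simp
  next
    case (Suc n)
    have first_period: "y x = z x" if "x \<in> {10/3..22/3}" for x
      using filippov_on_unique_on_period[OF \<open>10 \<le> a\<close> Suc.prems(1,2)] Suc.prems(3,4) that by simp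
    have "y (22/3) = 0"
      by (rule filippov_on_zero_at_22_3[OF \<open>10 \<le> a\<close> Suc.prems(1) _ _ Suc.prems(3)]) simp_all
    moreover have "z (22/3) = 0" using first_period[of "22/3"] \<open>y (22/3) = 0\<close> by simp
    moreover have "filippov_on a (\<lambda>x. y (x + 4)) (\<lambda>x. g (x + 4)) (10/3) v"
      "filippov_on a (\<lambda>x. z (x + 4)) (\<lambda>x. h (x + 4)) (10/3) v" for v
      using filippov_on_shift[OF filippov_on_subinterval[OF Suc.prems(1)[of "v + 4"], of "22/3" "v + 4"]]
        filippov_on_shift[OF filippov_on_subinterval[OF Suc.prems(2)[of "v + 4"], of "22/3" "v + 4"]]
      by simp_all
    ultimately have later: "\<forall>x\<in>{10/3..10/3 + 4 * real n}. y (x + 4) = z (x + 4)"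
      by (intro Suc.IH) simp_all
    show ?case
    proof
      fix x assume x: "x \<in> {10/3..10/3 + 4 * real (Suc n)}"
      show "y x = z x"
      proof (cases "x \<le> 22/3")
        case False
        then show ?thesis using bspec[OF later, of "x - 4"] x by simp
      qed (use first_period x in simp)
    qed
  qed
  moreover obtain n :: nat where "(x - 10/3) / 4 \<le> real n" using real_arch_simple by blast
  ultimately show ?thesis using assms by (fastforce simp: field_simps)
qed

lemma periodic_solution_exists:
  assumes "10 \<le> a"
  obtains p where "\<And>x. p (x + 4) = p x" "\<forall>x\<in>{29/9..10/3}. p x = 0"
    "\<And>u v. filippov_on a p (\<lambda>x. filippov_sel a x (p x)) u v"
proof -
  obtain Q where Q: "Q (10/3) = 0" "\<forall>x\<in>{65/9..22/3}. Q x = 0"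
    and fil: "filippov_on a Q (\<lambda>x. filippov_sel a x (Q x)) (10/3) (22/3)"
    by (rule filippov_on_exists_from_zero[OF assms, of "10/3"]) simp_all
  define p where "p x = Q (10/3 + 4 * frac ((x - 10/3) / 4))" for x
  have p_periodic: "p (x + 4) = p x" for x
  proof -
    have "(x + 4 - 10/3) / 4 = (x - 10/3) / 4 + 1" by (simp add: field_simps)
    then show ?thesis by (simp only: p_def frac_1_eq)
  qed
  have p_eq_Q: "p x = Q x" if "x \<in> {10/3..22/3}" for x
  proof (cases "x = 22/3")
    case True
    have "frac ((22/3 - 10/3) / 4 :: real) = 0" by simp
    then show ?thesis using Q(1) bspec[OF Q(2), of "22/3"] unfolding True p_def by simp
  next
    case False
    then have "frac ((x - 10/3) / 4) = (x - 10/3) / 4" using that by (simp add: frac_eq)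
    then have "10/3 + 4 * frac ((x - 10/3) / 4) = x" by simp
    then show ?thesis by (simp only: p_def)
  qed
  have "primitive_on p (\<lambda>x. filippov_sel a x (p x)) (10/3) (10/3 + 4)"
  proof (rule primitive_on_cong[of Q "\<lambda>x. filippov_sel a x (Q x)"])
    show "primitive_on Q (\<lambda>x. filippov_sel a x (Q x)) (10/3) (10/3 + 4)"
      using fil by (simp add: filippov_on_def)
  qed (simp_all add: p_eq_Q)
  then have "primitive_on p (\<lambda>x. filippov_sel a x (p x)) u v" for u v
    by (rule primitive_on_periodic[rotated 3]) (simp_all add: p_periodic filippov_sel_periodic)
  then have "filippov_on a p (\<lambda>x. filippov_sel a x (p x)) u v" for u v
    by (simp add: filippov_on_def filippov_sel_in_rhs)
  moreover have "p x = 0" if "x \<in> {29/9..10/3}" for x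
    using p_periodic[of x] p_eq_Q[of "x + 4"] bspec[OF Q(2), of "x + 4"] that by simp
  ultimately show thesis using that p_periodic by blast
qed

lemma filippov_sol_from_zero_exists:
  assumes "10 \<le> a" "8/3 < xi" "xi < 4"
    and p: "\<And>u v. filippov_on a p gp u v" and "p (10/3) = 0" "p (22/3) = 0"
  shows "\<exists>y. filippov_sol a y xi \<and> y xi = 0"
proof (cases "xi \<le> 10/3")
  case True
  have "filippov_on a (\<lambda>_. 0) (\<lambda>x. filippov_sel a x 0) xi (10/3)"
    by (rule filippov_on_zero) (use forcings_attracting \<open>8/3 < xi\<close> in force)
  then have "filippov_on a (\<lambda>x. if x \<le> 10/3 then 0 else p x)
      (\<lambda>x. if x < 10/3 then filippov_sel a x 0 else gp x) xi v" for v
    by (rule filippov_on_glue[OF _ p]) (use \<open>p (10/3) = 0\<close> in simp)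
  then show ?thesis using True unfolding filippov_sol_iff by fastforce
next
  case False
  obtain Q where "Q xi = 0" "\<forall>x\<in>{65/9..22/3}. Q x = 0"
    and fil: "filippov_on a Q (\<lambda>x. filippov_sel a x (Q x)) xi (22/3)"
    by (rule filippov_on_exists_from_zero[OF \<open>10 \<le> a\<close>, of xi]) (use False \<open>xi < 4\<close> in auto)
  moreover have "filippov_on a (\<lambda>x. if x \<le> 22/3 then Q x else p x)
      (\<lambda>x. if x < 22/3 then filippov_sel a x (Q x) else gp x) xi v" for v
    by (rule filippov_on_glue[OF fil p]) (use \<open>p (22/3) = 0\<close> \<open>\<forall>x\<in>{65/9..22/3}. Q x = 0\<close> in simp)
  ultimately show ?thesis using \<open>xi < 4\<close> unfolding filippov_sol_iff by fastforce
qed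

lemma filippov_sol_from_zero_converges:
  assumes "10 \<le> a" "8/3 < xi" "xi < 4"
    and p: "\<And>u v. filippov_on a p gp u v" "\<And>x. p (x + 4) = p x" "p (10/3) = 0"
    and "filippov_sol a y xi" "y xi = 0" and x: "22/3 \<le> x"
  shows "y x = p x"
proof -
  obtain g where fil: "\<And>v. filippov_on a y g xi v"
    using \<open>filippov_sol a y xi\<close> unfolding filippov_sol_iff by blast
  show ?thesis
  proof (cases "xi \<le> 10/3")
    case True
    have "y (10/3) = 0"
    proof (rule filippov_on_stays_zero[OF fil[of "10/3"]])
      show "f_plus t \<le> 0 \<and> 0 \<le> f_minus t" if "t \<in> {xi..10/3}" for t
        using forcings_attracting_closed[of t] that \<open>8/3 < xi\<close> by simp
    qed (use assms True in auto)
    moreover have "filippov_on a y g (10/3) v" for v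
      using filippov_on_subinterval[OF fil[of v], of "10/3" v] True by simp
    ultimately show ?thesis
      using filippov_unique_after_10_3[OF \<open>10 \<le> a\<close>, of y g p gp x] p x by simp
  next
    case False
    have "y (22/3) = 0"
      by (rule filippov_on_zero_at_22_3[OF \<open>10 \<le> a\<close> fil]) (use assms False in auto)
    have shifted_y: "filippov_on a (\<lambda>x. y (x + 4)) (\<lambda>x. g (x + 4)) (10/3) v" for v
      using filippov_on_shift[OF filippov_on_subinterval[OF fil[of "v + 4"], of "22/3" "v + 4"]] \<open>xi < 4\<close>
      by simp
    have shifted_p: "filippov_on a (\<lambda>x. p (x + 4)) (\<lambda>x. gp (x + 4)) (10/3) v" for v
      using filippov_on_shift[OF p(1)[of "22/3" "v + 4"]] by simp
    have "p (22/3) = 0" using p(2)[of "10/3"] p(3) by simp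
    then have "y (x - 4 + 4) = p (x - 4 + 4)"
      using filippov_unique_after_10_3[OF \<open>10 \<le> a\<close> shifted_y shifted_p, of "x - 4"] \<open>y (22/3) = 0\<close> x
      by simp
    then show ?thesis by simp
  qed
qed

theorem theorem2:
  shows "\<exists>a_h > 0. \<forall>a > a_h. \<exists>p :: real \<Rightarrow> real.
     filippov_sol a p 0 \<and> (\<forall>x\<ge>0. p (x + 4) = p x) \<and> sliding p \<and> p (10/3) = 0 \<and>
     (\<exists>\<nu> > 0. \<forall>xi \<in> {8/3<..<10/3} \<union> {10/3<..<10/3 + \<nu>}.
        (\<exists>y. filippov_sol a y xi \<and> y xi = 0) \<and>
        (\<forall>y. filippov_sol a y xi \<and> y xi = 0 \<longrightarrow> (\<exists>X. \<forall>x\<ge>X. y x = p x)))"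
proof (intro exI[of _ 10] conjI allI impI)
  fix a :: real assume "10 < a"
  then have "10 \<le> a" by simp
  obtain p where periodic: "\<And>x. p (x + 4) = p x" and zero: "\<forall>x\<in>{29/9..10/3}. p x = 0"
    and fil: "\<And>u v. filippov_on a p (\<lambda>x. filippov_sel a x (p x)) u v"
    using periodic_solution_exists[OF \<open>10 \<le> a\<close>] by blast
  have "p (10/3) = 0" using zero by simp
  moreover have "p (22/3) = 0" using periodic[of "10/3"] \<open>p (10/3) = 0\<close> by simp
  moreover have "sliding p"
    unfolding sliding_def LambdaL_def
    by (intro exI[of _ "29/9"] exI[of _ "33/10"]) (use zero in \<open>auto intro: exI[of _ 1]\<close>)
  moreover have "filippov_sol a p 0" unfolding filippov_sol_iff using fil by blast
  moreover have "(\<exists>y. filippov_sol a y xi \<and> y xi = 0) \<and>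
      (\<forall>y. filippov_sol a y xi \<and> y xi = 0 \<longrightarrow> (\<exists>X. \<forall>x\<ge>X. y x = p x))"
    if "xi \<in> {8/3<..<10/3} \<union> {10/3<..<10/3 + 2/3}" for xi
  proof -
    have xi: "8/3 < xi" "xi < 4" using that by auto
    show ?thesis
      using filippov_sol_from_zero_exists[OF \<open>10 \<le> a\<close> xi fil \<open>p (10/3) = 0\<close> \<open>p (22/3) = 0\<close>]
        filippov_sol_from_zero_converges[OF \<open>10 \<le> a\<close> xi fil periodic \<open>p (10/3) = 0\<close>] by blast
  qed
  ultimately show "\<exists>p. filippov_sol a p 0 \<and> (\<forall>x\<ge>0. p (x + 4) = p x) \<and> sliding p \<and> p (10/3) = 0 \<and>
     (\<exists>\<nu> > 0. \<forall>xi \<in> {8/3<..<10/3} \<union> {10/3<..<10/3 + \<nu>}.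
        (\<exists>y. filippov_sol a y xi \<and> y xi = 0) \<and>
        (\<forall>y. filippov_sol a y xi \<and> y xi = 0 \<longrightarrow> (\<exists>X. \<forall>x\<ge>X. y x = p x)))"
    using periodic by (intro exI[of _ p] conjI exI[of _ "2/3"]) auto
qed simp

end
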